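(* Let $\alpha=(\alpha_1,\dots,\alpha_k)$ be a composition of $n$ with $k$ parts. Fix positive integers $i_1<i_2<\dots<i_k$ and consider the set of all words (rearrangements) of the multiset containing $i_j$ with multiplicity $\alpha_j$ for $j=1,\dots,k$ (i.e. words with this fixed content, whose packed content is $\alpha$). Then the number of Sylvester equivalence classes of these words is \[\det\left[\binom{\,j+\sum_{\ell=1}^{i}\alpha_{k+1-\ell}\,}{\,j-(i-1)\,}\right]_{1\le i,j\le k-1}\] (the empty determinant, for $k=1$, being $1$).
   Context: Words are finite sequences of positive integers. The packed content of a word is the composition listing the multiplicities of its distinct letters in increasing order of the letters. Two words $w_1,w_2$ are Sylvester adjacent if there are words $u,v,w$ and letters $a\le b<c$ with $w_1=u\,a\,c\,v\,b\,w$ and $w_2=u\,c\,a\,v\,b\,w$ (concatenation). Sylvester equivalence is the equivalence relation generated by Sylvester adjacency (words $u,v$ are equivalent if there is a chain $u=x_1,x_2,\dots,x_m=v$ with consecutive terms Sylvester adjacent). A binomial coefficient $\binom{N}{r}$ with $r<0$ is $0$. *)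

theory Defs
  imports Main "Jordan_Normal_Form.Determinant"
begin

definition sylv_adj :: "nat list \<Rightarrow> nat list \<Rightarrow> bool" where
  "sylv_adj w1 w2 \<longleftrightarrow> (\<exists>u v w a b c. a \<le> b \<and> b < c \<and>
      w1 = u @ [a, c] @ v @ [b] @ w \<and> w2 = u @ [c, a] @ v @ [b] @ w)"

definition sylv_equiv :: "nat list \<Rightarrow> nat list \<Rightarrow> bool" where
  "sylv_equiv = (\<lambda>x y. sylv_adj x y \<or> sylv_adj y x)\<^sup>*\<^sup>*"

definition words_with_content :: "nat list \<Rightarrow> nat list \<Rightarrow> nat list set" where
  "words_with_content al is = {w. mset w = mset (concat (map2 replicate al is))}"

definition sylv_classes :: "nat list \<Rightarrow> nat list \<Rightarrow> nat list set set" where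
  "sylv_classes al is = words_with_content al is //
     {(u, v). u \<in> words_with_content al is \<and> v \<in> words_with_content al is \<and> sylv_equiv u v}"

definition binom_int :: "nat \<Rightarrow> int \<Rightarrow> int" where
  "binom_int N r = (if r < 0 then 0 else int (N choose nat r))"

text \<open>The (k-1)x(k-1) matrix, 0-based indices i,j standing for i+1, j+1:
  entry binom((j+1) + sum_{l=1}^{i+1} al_{k+1-l}, (j+1) - i), al_m = al!(m-1).\<close>
definition sylv_matrix :: "nat list \<Rightarrow> int mat" where
  "sylv_matrix al = (let k = length al in
     mat (k - 1) (k - 1) (\<lambda>(i, j).
       binom_int (j + 1 + (\<Sum>l\<in>{1..i+1}. al ! (k - l))) (int (j + 1) - int i)))"

end

(*
  Read a word from right to left and insert its letters into a binary search tree, ties going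
  to the left subtree.  The resulting tree is a complete invariant of Sylvester equivalence:
  adjacent words give the same tree, and conversely every word w x is equivalent to
  (letters of w that are \<le> x) (letters of w that are > x) x, so words with equal trees are
  equivalent by induction.  Hence the classes of content M are counted by the number N M of
  such trees, and choosing the root gives N M = \<Sum>x. N (letters \<le> x, one x removed) * N (letters > x).
  If y < z are the two largest letters, with multiplicities p, q \<ge> 1, this recursion yields
  N (A + p y + q z) = N (A + (p + q) y) + N (A + p y + (q - 1) z).
  The determinant obeys the same recursion: taking differences of consecutive columns and
  applying Pascal's rule changes the matrix only in its (0, 0) entry, and expanding along the
  first row splits the determinant into the one with the top multiplicity lowered by one and
  the one of size one less, in which the two top multiplicities are merged.
*)
theory Submission
  imports Defs "HOL-Library.Tree" "HOL-Combinatorics.Multiset_Permutations"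
begin

section \<open>Sylvester classes are binary search trees\<close>

function sylv_tree :: "'a::linorder list \<Rightarrow> 'a tree" where
  "sylv_tree w = (if w = [] then Leaf else
     \<langle>sylv_tree (filter (\<lambda>y. y \<le> last w) (butlast w)), last w,
      sylv_tree (filter (\<lambda>y. last w < y) (butlast w))\<rangle>)"
  by pat_completeness auto
termination
  by (relation "measure length") (auto simp: le_less_trans[OF length_filter_le])

declare sylv_tree.simps [simp del]

lemma sylv_tree_Nil [simp]: "sylv_tree [] = Leaf"
  by (simp add: sylv_tree.simps)

lemma sylv_tree_snoc [simp]:
  "sylv_tree (w @ [x]) = \<langle>sylv_tree (filter (\<lambda>y. y \<le> x) w), x, sylv_tree (filter (\<lambda>y. x < y) w)\<rangle>"
  by (simp add: sylv_tree.simps)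

lemma sylv_tree_eq_Leaf_iff [simp]: "sylv_tree w = Leaf \<longleftrightarrow> w = []"
  by (cases w rule: rev_exhaust) auto

(* The letter b makes sure that a and c are split into different subtrees before the recursion
   reaches them: by a later root x with a \<le> x < c, or else by b itself. *)
lemma sylv_tree_swap:
  fixes a b c :: "'a::linorder"
  assumes "a \<le> b" "b < c"
  shows "sylv_tree (u @ [a, c] @ v @ [b] @ w) = sylv_tree (u @ [c, a] @ v @ [b] @ w)"
  using assms
proof (induction "length w" arbitrary: u v w rule: less_induct)
  case less
  show ?case
  proof (cases w rule: rev_exhaust)
    case Nil
    have "\<not> c \<le> b" "\<not> b < a" using less.prems by auto
    with Nil show ?thesis
      using sylv_tree_snoc[of "u @ [a, c] @ v" b] sylv_tree_snoc[of "u @ [c, a] @ v" b] by simp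
  next
    case (snoc w' x)
    have shorter: "length (filter P w') < length w" for P
      by (simp add: snoc le_imp_less_Suc)
    have as_snoc: "u @ [a', c'] @ v @ [b] @ w = (u @ [a', c'] @ v @ [b] @ w') @ [x]" for a' c'
      by (simp add: snoc)
    consider "c \<le> x" | "x < a" | "a \<le> x" "x < c" by (meson not_le)
    then show ?thesis
    proof cases
      case 1
      with less.prems have "a \<le> x" "b \<le> x" "\<not> x < a" "\<not> x < b" "\<not> x < c"
        by (meson leD order.trans less_imp_le)+
      with 1 less.prems show ?thesis
        unfolding as_snoc sylv_tree_snoc
        using less.hyps[OF shorter, of "filter (\<lambda>y. y \<le> x) u" "filter (\<lambda>y. y \<le> x) v" "\<lambda>y. y \<le> x"]
        by simp
    next
      case 2
      with less.prems have "x < b" "x < c" "\<not> a \<le> x" "\<not> b \<le> x" "\<not> c \<le> x"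
        by (meson not_le order.strict_trans1 order.strict_trans)+
      with 2 less.prems show ?thesis
        unfolding as_snoc sylv_tree_snoc
        using less.hyps[OF shorter, of "filter (\<lambda>y. x < y) u" "filter (\<lambda>y. x < y) v" "\<lambda>y. x < y"]
        by simp
    next
      case 3
      then have "\<not> x < a" "\<not> c \<le> x" by (simp_all add: leD)
      with 3 show ?thesis unfolding as_snoc sylv_tree_snoc by simp
    qed
  qed
qed

lemma sylv_equiv_symclp: "sylv_equiv = (symclp sylv_adj)\<^sup>*\<^sup>*"
  unfolding sylv_equiv_def symclp_def ..

lemma equivp_sylv_equiv: "equivp sylv_equiv"
  unfolding sylv_equiv_symclp by (rule equivp_rtranclp_symclp)

lemma sylv_equiv_refl [simp]: "sylv_equiv w w"
  using equivp_reflp[OF equivp_sylv_equiv] .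

lemma sylv_equiv_sym: "sylv_equiv u v \<Longrightarrow> sylv_equiv v u"
  using equivp_symp[OF equivp_sylv_equiv] .

lemma sylv_equiv_trans [trans]: "sylv_equiv u v \<Longrightarrow> sylv_equiv v w \<Longrightarrow> sylv_equiv u w"
  using equivp_transp[OF equivp_sylv_equiv] .

lemma sylv_adjI:
  "a \<le> b \<Longrightarrow> b < c \<Longrightarrow> sylv_adj (u @ [a, c] @ v @ [b] @ w) (u @ [c, a] @ v @ [b] @ w)"
  unfolding sylv_adj_def by blast

lemma sylv_adj_imp_sylv_tree_eq: "sylv_adj u v \<Longrightarrow> sylv_tree u = sylv_tree v"
  unfolding sylv_adj_def using sylv_tree_swap by blast

lemma sylv_equiv_imp_sylv_tree_eq: "sylv_equiv u v \<Longrightarrow> sylv_tree u = sylv_tree v"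
  unfolding sylv_equiv_symclp
  by (induction rule: rtranclp_induct) (auto simp: symclp_def dest: sylv_adj_imp_sylv_tree_eq)

lemma sylv_adj_append:
  "sylv_adj u v \<Longrightarrow> sylv_adj (p @ u @ s) (p @ v @ s)"
  unfolding sylv_adj_def by (metis append.assoc)

lemma sylv_equiv_append:
  "sylv_equiv u v \<Longrightarrow> sylv_equiv (p @ u @ s) (p @ v @ s)"
  unfolding sylv_equiv_symclp
proof (induction rule: rtranclp_induct)
  case (step v w)
  then have "symclp sylv_adj (p @ v @ s) (p @ w @ s)"
    by (metis symclp_def sylv_adj_append)
  with step.IH show ?case by (rule rtranclp.rtrancl_into_rtrancl)
qed simp

lemma sylv_equiv_move_left:
  fixes x z :: nat
  assumes "z \<le> x" "\<forall>r\<in>set R. x < r"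
  shows "sylv_equiv (L @ R @ [z] @ t @ [x]) (L @ [z] @ R @ t @ [x])"
  using assms
proof (induction R arbitrary: t rule: rev_induct)
  case (snoc r R)
  have "sylv_adj ((L @ R) @ [z, r] @ t @ [x] @ []) ((L @ R) @ [r, z] @ t @ [x] @ [])"
    using snoc.prems by (intro sylv_adjI) auto
  then have "sylv_equiv (L @ (R @ [r]) @ [z] @ t @ [x]) (L @ R @ [z] @ (r # t) @ [x])"
    unfolding sylv_equiv_symclp by (intro r_into_rtranclp symclpI2) simp
  also have "sylv_equiv \<dots> (L @ [z] @ R @ (r # t) @ [x])"
    using snoc.IH[of "r # t"] snoc.prems by simp
  finally show ?case
    by simp
qed simp

lemma sylv_equiv_partition_prefix:
  fixes x :: nat
  assumes "\<forall>r\<in>set R. x < r"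
  shows "sylv_equiv (L @ R @ w @ [x]) (L @ filter (\<lambda>y. y \<le> x) w @ R @ filter (\<lambda>y. x < y) w @ [x])"
  using assms
proof (induction w arbitrary: L R)
  case (Cons z w)
  show ?case
  proof (cases "z \<le> x")
    case True
    have "sylv_equiv (L @ R @ [z] @ w @ [x]) ((L @ [z]) @ R @ w @ [x])"
      using sylv_equiv_move_left[OF True] Cons.prems by simp
    also have "sylv_equiv \<dots> ((L @ [z]) @ filter (\<lambda>y. y \<le> x) w @ R @ filter (\<lambda>y. x < y) w @ [x])"
      using Cons by blast
    finally show ?thesis
      using True by simp
  next
    case False
    then show ?thesis
      using Cons.IH[of "R @ [z]" L] Cons.prems by simp
  qed
qed simp

lemma sylv_equiv_partition:
  "sylv_equiv (w @ [x]) (filter (\<lambda>y. y \<le> x) w @ filter (\<lambda>y. x < y) w @ [x])"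
  using sylv_equiv_partition_prefix[of "[]" x "[]" w] by simp

lemma sylv_tree_eq_imp_sylv_equiv:
  fixes u v :: "nat list"
  assumes "sylv_tree u = sylv_tree v"
  shows "sylv_equiv u v"
  using assms
proof (induction "length u" arbitrary: u v rule: less_induct)
  case less
  show ?case
  proof (cases u rule: rev_exhaust)
    case Nil
    with less.prems show ?thesis by (metis sylv_tree_eq_Leaf_iff sylv_equiv_refl)
  next
    case (snoc u' x)
    with less.prems obtain v' where v: "v = v' @ [x]"
      and left: "sylv_tree (filter (\<lambda>y. y \<le> x) u') = sylv_tree (filter (\<lambda>y. y \<le> x) v')"
      and right: "sylv_tree (filter (\<lambda>y. x < y) u') = sylv_tree (filter (\<lambda>y. x < y) v')"
      by (cases v rule: rev_exhaust) auto
    have shorter: "length (filter P u') < length u" for P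
      by (simp add: snoc le_imp_less_Suc)
    have "sylv_equiv u (filter (\<lambda>y. y \<le> x) u' @ filter (\<lambda>y. x < y) u' @ [x])"
      unfolding snoc by (rule sylv_equiv_partition)
    also have "sylv_equiv \<dots> (filter (\<lambda>y. y \<le> x) v' @ filter (\<lambda>y. x < y) u' @ [x])"
      using sylv_equiv_append[OF less.hyps[OF shorter left], of "[]" "filter (\<lambda>y. x < y) u' @ [x]"]
      by simp
    also have "sylv_equiv \<dots> (filter (\<lambda>y. y \<le> x) v' @ filter (\<lambda>y. x < y) v' @ [x])"
      using sylv_equiv_append[OF less.hyps[OF shorter right], of "filter (\<lambda>y. y \<le> x) v'" "[x]"]
      by simp
    also have "sylv_equiv \<dots> v"
      unfolding v by (rule sylv_equiv_sym[OF sylv_equiv_partition])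
    finally show ?thesis .
  qed
qed

lemma sylv_equiv_iff_sylv_tree_eq: "sylv_equiv u v \<longleftrightarrow> sylv_tree u = sylv_tree v"
  using sylv_equiv_imp_sylv_tree_eq sylv_tree_eq_imp_sylv_equiv by blast

section \<open>Counting binary search trees\<close>

lemma card_quotient_kernel:
  "card (A // {(u, v). u \<in> A \<and> v \<in> A \<and> f u = f v}) = card (f ` A)"
proof -
  let ?class = "\<lambda>t. {w \<in> A. f w = t}"
  have "{(u, v). u \<in> A \<and> v \<in> A \<and> f u = f v} `` {x} = ?class (f x)" if "x \<in> A" for x
    using that by auto
  then have "A // {(u, v). u \<in> A \<and> v \<in> A \<and> f u = f v} = ?class ` f ` A"
    unfolding quotient_def by (auto simp: image_image)
  moreover have "inj_on ?class (f ` A)"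
    by (auto simp: inj_on_def)
  ultimately show ?thesis
    by (simp add: card_image)
qed

definition bsts :: "'a::linorder multiset \<Rightarrow> 'a tree set" where
  "bsts M = sylv_tree ` permutations_of_multiset M"

definition bst_count :: "'a::linorder multiset \<Rightarrow> nat" where
  "bst_count M = card (bsts M)"

definition content_mset :: "nat list \<Rightarrow> 'a list \<Rightarrow> 'a multiset" where
  "content_mset r xs = mset (concat (map2 replicate r xs))"

lemma content_mset_Nil [simp]: "content_mset [] xs = {#}"
  by (simp add: content_mset_def)

lemma content_mset_Cons_Cons [simp]:
  "content_mset (q # r) (x # xs) = replicate_mset q x + content_mset r xs"
  by (simp add: content_mset_def)

lemma set_content_mset: "set_mset (content_mset r xs) \<subseteq> set xs"
  by (auto simp: content_mset_def dest: set_zip_rightD)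

lemma content_mset_rev:
  "length r = length xs \<Longrightarrow> content_mset (rev r) (rev xs) = content_mset r xs"
  by (induction r xs rule: list_induct2) (simp_all add: content_mset_def zip_rev add.commute)

lemma card_sylv_classes: "card (sylv_classes al is) = bst_count (content_mset al is)"
proof -
  have "card (sylv_classes al is) = card (sylv_tree ` words_with_content al is)"
    unfolding sylv_classes_def sylv_equiv_iff_sylv_tree_eq by (rule card_quotient_kernel)
  then show ?thesis
    by (simp add: bst_count_def bsts_def words_with_content_def
        content_mset_def permutations_of_multiset_def)
qed

definition lower_mset :: "'a::linorder \<Rightarrow> 'a multiset \<Rightarrow> 'a multiset" where
  "lower_mset x M = filter_mset (\<lambda>y. y \<le> x) (M - {#x#})"

definition upper_mset :: "'a::linorder \<Rightarrow> 'a multiset \<Rightarrow> 'a multiset" where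
  "upper_mset x M = filter_mset (\<lambda>y. x < y) M"

lemma lower_mset_le: "y \<in># lower_mset x M \<Longrightarrow> y \<le> x"
  by (auto simp: lower_mset_def dest: in_diffD)

lemma upper_mset_gt: "y \<in># upper_mset x M \<Longrightarrow> x < y"
  by (simp add: upper_mset_def)

lemma bsts_empty [simp]: "bsts {#} = {Leaf}"
  by (simp add: bsts_def)

lemma bsts_nonempty:
  assumes "M \<noteq> {#}"
  shows "bsts M = (\<Union>x\<in>set_mset M. (\<lambda>(l, r). \<langle>l, x, r\<rangle>) ` (bsts (lower_mset x M) \<times> bsts (upper_mset x M)))"
proof (intro equalityI subsetI)
  fix t assume "t \<in> bsts M"
  then obtain w where w: "mset w = M" "t = sylv_tree w"
    by (auto simp: bsts_def permutations_of_multiset_def)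
  with assms obtain w' x where wx: "w = w' @ [x]"
    by (cases w rule: rev_exhaust) auto
  with w have "x \<in># M" "M - {#x#} = mset w'"
    by auto
  with w wx show "t \<in> (\<Union>x\<in>set_mset M. (\<lambda>(l, r). \<langle>l, x, r\<rangle>) ` (bsts (lower_mset x M) \<times> bsts (upper_mset x M)))"
    by (force simp: bsts_def permutations_of_multiset_def lower_mset_def upper_mset_def)
next
  fix t assume "t \<in> (\<Union>x\<in>set_mset M. (\<lambda>(l, r). \<langle>l, x, r\<rangle>) ` (bsts (lower_mset x M) \<times> bsts (upper_mset x M)))"
  then obtain x wl wr where x: "x \<in># M" and t: "t = \<langle>sylv_tree wl, x, sylv_tree wr\<rangle>"
    and wl: "mset wl = lower_mset x M" and wr: "mset wr = upper_mset x M"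
    by (auto simp: bsts_def permutations_of_multiset_def)
  have wl_le: "\<forall>y\<in>set wl. y \<le> x"
    using wl lower_mset_le by (metis set_mset_mset)
  have wr_gt: "\<forall>y\<in>set wr. x < y"
    using wr upper_mset_gt by (metis set_mset_mset)
  have "upper_mset x M = filter_mset (\<lambda>y. \<not> y \<le> x) (M - {#x#})"
    using x by (subst (1) insert_DiffM[OF x, symmetric]) (simp add: upper_mset_def not_le)
  then have "mset (wl @ wr @ [x]) = M"
    using x wl wr by (simp add: lower_mset_def multiset_partition[symmetric])
  moreover have "sylv_tree (wl @ wr @ [x]) = t"
    using wl_le wr_gt t sylv_tree_snoc[of "wl @ wr" x]
    by (simp add: not_le not_less)
  ultimately show "t \<in> bsts M"
    by (auto simp: bsts_def permutations_of_multiset_def)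
qed

lemma bst_count_empty [simp]: "bst_count {#} = 1"
  by (simp add: bst_count_def)

lemma bst_count_nonempty:
  assumes "M \<noteq> {#}"
  shows "bst_count M = (\<Sum>x\<in>set_mset M. bst_count (lower_mset x M) * bst_count (upper_mset x M))"
proof -
  have "inj_on (\<lambda>(l, r). \<langle>l, x, r\<rangle>) A" for x and A :: "('a tree \<times> 'a tree) set"
    by (auto simp: inj_on_def)
  then show ?thesis
    unfolding bst_count_def bsts_nonempty[OF assms]
    by (subst card_UN_disjoint) (auto simp: card_image card_cartesian_product bsts_def)
qed

lemma bst_count_replicate [simp]: "bst_count (replicate_mset n x) = 1"
proof (induction n)
  case (Suc n)
  let ?M = "replicate_mset (Suc n) x"
  have "lower_mset x ?M = replicate_mset n x" "upper_mset x ?M = {#}"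
    by (simp_all add: lower_mset_def upper_mset_def filter_mset_eq_conv)
  moreover have "bst_count ?M = bst_count (lower_mset x ?M) * bst_count (upper_mset x ?M)"
    using bst_count_nonempty[of ?M] by (simp del: replicate_mset_Suc)
  ultimately show ?case
    using Suc by simp
qed simp

(* If every letter of A is below every letter of C, this counts the trees of content A + C
   whose root is a letter of A. *)
definition bst_count_root_in :: "'a::linorder multiset \<Rightarrow> 'a multiset \<Rightarrow> nat" where
  "bst_count_root_in A C =
     (\<Sum>x\<in>set_mset A. bst_count (lower_mset x A) * bst_count (upper_mset x A + C))"

lemma bst_count_add_separated:
  assumes sep: "\<forall>a\<in>#A. \<forall>c\<in>#C. a < c" and "A + C \<noteq> {#}"
  shows "bst_count (A + C) =
    bst_count_root_in A C + (\<Sum>x\<in>set_mset C. bst_count (A + lower_mset x C) * bst_count (upper_mset x C))"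
proof -
  have "set_mset A \<inter> set_mset C = {}"
    using sep by fastforce
  then have "bst_count (A + C) =
      (\<Sum>x\<in>set_mset A. bst_count (lower_mset x (A + C)) * bst_count (upper_mset x (A + C))) +
      (\<Sum>x\<in>set_mset C. bst_count (lower_mset x (A + C)) * bst_count (upper_mset x (A + C)))"
    using bst_count_nonempty[OF \<open>A + C \<noteq> {#}\<close>] by (simp add: sum.union_disjoint)
  moreover have "lower_mset x (A + C) = lower_mset x A" "upper_mset x (A + C) = upper_mset x A + C"
    if "x \<in># A" for x
  proof -
    have "\<forall>c\<in>#C. x < c"
      using that sep by blast
    then have "filter_mset (\<lambda>y. y \<le> x) C = {#}" "filter_mset (\<lambda>y. x < y) C = C"
      by (auto simp: filter_mset_eq_conv dest: leD)
    with that show "lower_mset x (A + C) = lower_mset x A" "upper_mset x (A + C) = upper_mset x A + C"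
      by (auto simp: lower_mset_def upper_mset_def dest!: multi_member_split)
  qed
  moreover have "lower_mset x (A + C) = A + lower_mset x C" "upper_mset x (A + C) = upper_mset x C"
    if "x \<in># C" for x
  proof -
    have "\<forall>a\<in>#A. a < x"
      using that sep by blast
    then have "filter_mset (\<lambda>y. y \<le> x) A = A" "filter_mset (\<lambda>y. x < y) A = {#}"
      by (auto simp: filter_mset_eq_conv dest: leD)
    with that show "lower_mset x (A + C) = A + lower_mset x C" "upper_mset x (A + C) = upper_mset x C"
      by (auto simp: lower_mset_def upper_mset_def dest!: multi_member_split)
  qed
  ultimately show ?thesis
    unfolding bst_count_root_in_def by (simp cong: sum.cong)
qed

lemma filter_mset_replicate_mset:
  "filter_mset P (replicate_mset n x) = (if P x then replicate_mset n x else {#})"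
  by (induction n) auto

lemma bst_count_add_replicate:
  assumes "\<forall>a\<in>#A. a < y" "n \<ge> 1"
  shows "bst_count (A + replicate_mset n y) =
    bst_count_root_in A (replicate_mset n y) + bst_count (A + replicate_mset (n - 1) y)"
proof -
  let ?C = "replicate_mset n y"
  have "set_mset ?C = {y}"
    using assms(2) by simp
  moreover have "lower_mset y ?C = replicate_mset (n - 1) y" "upper_mset y ?C = {#}"
    using assms(2) by (auto simp: lower_mset_def upper_mset_def filter_mset_replicate_mset
        dest!: Suc_le_D)
  ultimately show ?thesis
    using bst_count_add_separated[of A ?C] assms by auto
qed

lemma bst_count_add_two_replicates:
  assumes "\<forall>a\<in>#A. a < y" "y < z" "p \<ge> 1" "q \<ge> 1"
  shows "bst_count (A + (replicate_mset p y + replicate_mset q z)) =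
    bst_count_root_in A (replicate_mset p y + replicate_mset q z) +
    bst_count (A + replicate_mset (p - 1) y) +
    bst_count (A + (replicate_mset p y + replicate_mset (q - 1) z))"
proof -
  let ?C = "replicate_mset p y + replicate_mset q z"
  have "set_mset ?C = {y, z}"
    using assms(3,4) by auto
  moreover have "\<forall>a\<in>#A. \<forall>c\<in>#?C. a < c"
    using assms(1,2) by (auto dest: order.strict_trans)
  moreover have "lower_mset y ?C = replicate_mset (p - 1) y" "upper_mset y ?C = replicate_mset q z"
    "lower_mset z ?C = replicate_mset p y + replicate_mset (q - 1) z" "upper_mset z ?C = {#}"
    using assms(2-4) by (auto simp: lower_mset_def upper_mset_def filter_mset_replicate_mset
        dest!: Suc_le_D)
  ultimately show ?thesis
    using bst_count_add_separated[of A ?C] assms(2-4) by auto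
qed

lemma size_upper_mset_less: "x \<in># A \<Longrightarrow> size (upper_mset x A) < size A"
  by (auto simp: upper_mset_def le_imp_less_Suc dest!: multi_member_split)

(* Expand both sides by their roots: the roots in A are handled by induction on A, and the
   roots y and z by induction on q. *)
lemma bst_count_top_letters_rec:
  assumes "\<forall>a\<in>#A. a < y" "y < z" "p \<ge> 1" "q \<ge> 1"
  shows "bst_count (A + (replicate_mset p y + replicate_mset q z)) =
    bst_count (A + replicate_mset (p + q) y) +
    bst_count (A + (replicate_mset p y + replicate_mset (q - 1) z))"
  using assms
proof (induction "size A" arbitrary: A q rule: less_induct)
  case less
  let ?Y = "replicate_mset p y" and ?N = bst_count and ?R = "bst_count_root_in A"
  have root_in_split: "?R (?Y + replicate_mset q' z) =
      ?R (replicate_mset (p + q') y) + ?R (?Y + replicate_mset (q' - 1) z)"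
    if "q' \<ge> 1" for q'
  proof -
    have "?N (upper_mset x A + (?Y + replicate_mset q' z)) =
        ?N (upper_mset x A + replicate_mset (p + q') y) +
        ?N (upper_mset x A + (?Y + replicate_mset (q' - 1) z))"
      if "x \<in># A" for x
      using less.hyps[OF size_upper_mset_less[OF that]] less.prems \<open>q' \<ge> 1\<close>
      by (simp add: upper_mset_def)
    then show ?thesis
      unfolding bst_count_root_in_def by (simp add: sum.distrib distrib_left cong: sum.cong)
  qed
  have two: "?N (A + (?Y + replicate_mset q' z)) =
      ?R (?Y + replicate_mset q' z) + ?N (A + replicate_mset (p - 1) y) +
      ?N (A + (?Y + replicate_mset (q' - 1) z))"
    if "q' \<ge> 1" for q'
    using bst_count_add_two_replicates less.prems that by blast
  have one: "?N (A + replicate_mset n y) = ?R (replicate_mset n y) + ?N (A + replicate_mset (n - 1) y)"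
    if "n \<ge> 1" for n
    using bst_count_add_replicate less.prems that by blast
  from \<open>q \<ge> 1\<close> show ?case
  proof (induction q rule: nat_induct_at_least)
    case base
    then show ?case
      using two[of 1] one[of "p + 1"] one[of p] root_in_split[of 1] less.prems by simp
  next
    case (Suc q)
    then show ?case
      using two[of "Suc q"] two[of q] one[of "p + Suc q"] root_in_split[of "Suc q"] less.prems
      by simp
  qed
qed

section \<open>A binomial determinant\<close>

definition binom_mat :: "nat \<Rightarrow> (nat \<Rightarrow> nat) \<Rightarrow> int mat" where
  "binom_mat m s = mat m m (\<lambda>(i, j). binom_int (j + 1 + s i) (int (j + 1) - int i))"

definition binom_mat_diff :: "nat \<Rightarrow> (nat \<Rightarrow> nat) \<Rightarrow> int mat" where
  "binom_mat_diff m s = mat m m (\<lambda>(i, j). binom_int (j + s i) (int (j + 1) - int i))"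

definition col_diff_mat :: "nat \<Rightarrow> int mat" where
  "col_diff_mat m = mat m m (\<lambda>(i, j). if i = j then 1 else if Suc i = j then -1 else 0)"

lemma binom_mat_carrier [simp]: "binom_mat m s \<in> carrier_mat m m"
  and binom_mat_diff_carrier [simp]: "binom_mat_diff m s \<in> carrier_mat m m"
  and col_diff_mat_carrier [simp]: "col_diff_mat m \<in> carrier_mat m m"
  by (simp_all add: binom_mat_def binom_mat_diff_def col_diff_mat_def)

lemma dim_binom_mat [simp]:
  "dim_row (binom_mat m s) = m" "dim_col (binom_mat m s) = m"
  "dim_row (binom_mat_diff m s) = m" "dim_col (binom_mat_diff m s) = m"
  "dim_row (col_diff_mat m) = m" "dim_col (col_diff_mat m) = m"
  by (simp_all add: binom_mat_def binom_mat_diff_def col_diff_mat_def)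

lemma binom_int_Suc: "binom_int (Suc n) (r + 1) = binom_int n (r + 1) + binom_int n r"
proof (cases "r \<ge> 0")
  case True
  then obtain k where k: "r = int k"
    using zero_le_imp_eq_int by blast
  then have "nat (r + 1) = Suc k"
    by simp
  with k show ?thesis
    by (simp add: binom_int_def)
next
  case False
  then have "r < -1 \<or> r = -1"
    by linarith
  then show ?thesis
    by (elim disjE) (simp_all add: binom_int_def)
qed

lemma det_col_diff_mat: "det (col_diff_mat m) = 1"
proof -
  have "upper_triangular (col_diff_mat m)"
    by (auto simp: upper_triangular_def col_diff_mat_def)
  moreover have "diag_mat (col_diff_mat m) = replicate m 1"
    by (rule nth_equalityI) (auto simp: diag_mat_def col_diff_mat_def)
  ultimately show ?thesis
    by (simp add: det_upper_triangular[OF _ col_diff_mat_carrier])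
qed

lemma sum_mult_col_diff:
  fixes f :: "nat \<Rightarrow> int"
  assumes "j < m"
  shows "(\<Sum>k<m. f k * (if k = j then 1 else if Suc k = j then -1 else 0)) =
    f j - (if j > 0 then f (j - 1) else 0)"
proof -
  have "(\<Sum>k<m. f k * (if k = j then 1 else if Suc k = j then -1 else 0)) =
      (\<Sum>k<m. (if k = j then f k else 0) - (if 0 < j \<and> k = j - 1 then f k else 0))"
    by (rule sum.cong) auto
  with assms show ?thesis
    by (simp add: sum_subtractf)
qed

lemma binom_mat_mult_col_diff_mat:
  assumes "i < m" "j < m"
  shows "(binom_mat m s * col_diff_mat m) $$ (i, j) =
    binom_mat_diff m s $$ (i, j) + (if i = 0 \<and> j = 0 then 1 else 0)"
proof -
  let ?B = "binom_mat m s"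
  have "(?B * col_diff_mat m) $$ (i, j) =
      (\<Sum>k<m. ?B $$ (i, k) * (if k = j then 1 else if Suc k = j then -1 else 0))"
    using assms by (auto simp: scalar_prod_def col_diff_mat_def lessThan_atLeast0 intro!: sum.cong)
  also have "\<dots> = ?B $$ (i, j) - (if j > 0 then ?B $$ (i, j - 1) else 0)"
    using assms(2) by (rule sum_mult_col_diff)
  also have "\<dots> = binom_mat_diff m s $$ (i, j) + (if i = 0 \<and> j = 0 then 1 else 0)"
  proof (cases j)
    case 0
    have "binom_int (Suc (s i)) (- int i + 1) = binom_int (s i) (- int i + 1) + binom_int (s i) (- int i)"
      by (rule binom_int_Suc)
    with 0 assms show ?thesis
      by (simp add: binom_mat_def binom_mat_diff_def binom_int_def)
  next
    case (Suc j')
    have "binom_int (Suc (j + s i)) (int j - int i + 1) =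
        binom_int (j + s i) (int j - int i + 1) + binom_int (j + s i) (int j - int i)"
      by (rule binom_int_Suc)
    with Suc assms show ?thesis
      by (simp add: binom_mat_def binom_mat_diff_def algebra_simps)
  qed
  finally show ?thesis .
qed

lemma mat_delete_binom_mat_diff_0_0:
  "mat_delete (binom_mat_diff m s) 0 0 = binom_mat (m - 1) (s \<circ> Suc)"
  by (rule eq_matI) (auto simp: mat_delete_def binom_mat_diff_def binom_mat_def)

lemma det_binom_mat:
  assumes "m \<ge> 1"
  shows "det (binom_mat m s) = det (binom_mat_diff m s) + det (binom_mat (m - 1) (s \<circ> Suc))"
proof -
  let ?B = "binom_mat m s" and ?D = "binom_mat_diff m s"
  let ?P = "?B * col_diff_mat m"
  have P: "?P \<in> carrier_mat m m"
    by (simp add: mult_carrier_mat[of _ m m _ m])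
  have "det ?B = det ?P"
    by (simp add: det_mult[of _ m] det_col_diff_mat)
  also have "\<dots> = (\<Sum>j<m. ?P $$ (0, j) * cofactor ?P 0 j)"
    using laplace_expansion_row[OF P] assms by simp
  also have "\<dots> = (\<Sum>j<m. ?D $$ (0, j) * cofactor ?D 0 j + (if j = 0 then cofactor ?D 0 j else 0))"
  proof (rule sum.cong[OF refl])
    fix j assume "j \<in> {..<m}"
    \<comment> \<open>?P and ?D differ only in the entry (0, 0), so deleting row 0 gives equal minors\<close>
    have "mat_delete ?P 0 j = mat_delete ?D 0 j"
    proof (rule eq_matI)
      fix i' j' assume "i' < dim_row (mat_delete ?D 0 j)" "j' < dim_col (mat_delete ?D 0 j)"
      with \<open>j \<in> {..<m}\<close> show "mat_delete ?P 0 j $$ (i', j') = mat_delete ?D 0 j $$ (i', j')"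
        using binom_mat_mult_col_diff_mat[of "Suc i'" m j' s] binom_mat_mult_col_diff_mat[of "Suc i'" m "Suc j'" s]
        by (cases "j' < j") (simp_all add: mat_delete_def)
    qed simp_all
    with \<open>j \<in> {..<m}\<close> assms show "?P $$ (0, j) * cofactor ?P 0 j =
        ?D $$ (0, j) * cofactor ?D 0 j + (if j = 0 then cofactor ?D 0 j else 0)"
      using binom_mat_mult_col_diff_mat[of 0 m j s] by (simp add: cofactor_def algebra_simps)
  qed
  also have "\<dots> = det ?D + cofactor ?D 0 0"
    using laplace_expansion_row[OF binom_mat_diff_carrier, of 0 m s] assms
    by (simp add: sum.distrib)
  also have "cofactor ?D 0 0 = det (binom_mat (m - 1) (s \<circ> Suc))"
    by (simp add: cofactor_def mat_delete_binom_mat_diff_0_0)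
  finally show ?thesis .
qed

lemma binom_mat_diff_eq_binom_mat:
  assumes "\<And>i. i < m \<Longrightarrow> s i \<ge> 1"
  shows "binom_mat_diff m s = binom_mat m (\<lambda>i. s i - 1)"
proof (rule eq_matI)
  fix i j assume "i < dim_row (binom_mat m (\<lambda>i. s i - 1))" "j < dim_col (binom_mat m (\<lambda>i. s i - 1))"
  moreover from this have "s i \<ge> 1"
    using assms by simp
  ultimately show "binom_mat_diff m s $$ (i, j) = binom_mat m (\<lambda>i. s i - 1) $$ (i, j)"
    by (simp add: binom_mat_diff_def binom_mat_def)
qed simp_all

lemma det_binom_mat_diff_eq_0:
  assumes "m \<ge> 1" "s 0 = 0"
  shows "det (binom_mat_diff m s) = 0"
proof -
  have "binom_mat_diff m s $$ (0, j) = 0" if "j < m" for j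
    using that assms by (simp add: binom_mat_diff_def binom_int_def)
  then show ?thesis
    using laplace_expansion_row[OF binom_mat_diff_carrier, of 0 m s] assms by simp
qed

(* r lists the multiplicities from the largest letter down; row i (counted from 0) uses the
   partial sum of its first i + 1 entries, the paper's alpha_k + ... + alpha_(k-i). *)
definition sylv_det :: "nat list \<Rightarrow> int" where
  "sylv_det r = det (binom_mat (length r - 1) (\<lambda>i. sum_list (take (Suc i) r)))"

lemma sylv_det_singleton [simp]: "sylv_det [a] = 1"
  by (simp add: sylv_det_def)

lemma sylv_det_Cons_Cons:
  "sylv_det (q # p # t) = (if q = 0 then 0 else sylv_det ((q - 1) # p # t)) + sylv_det ((p + q) # t)"
proof -
  let ?s = "\<lambda>i. sum_list (take (Suc i) (q # p # t))" and ?m = "Suc (length t)"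
  have "(?s \<circ> Suc) = (\<lambda>i. sum_list (take (Suc i) ((p + q) # t)))"
    by (simp add: fun_eq_iff)
  then have "det (binom_mat (?m - 1) (?s \<circ> Suc)) = sylv_det ((p + q) # t)"
    by (simp add: sylv_det_def)
  moreover have "det (binom_mat_diff ?m ?s) = (if q = 0 then 0 else sylv_det ((q - 1) # p # t))"
  proof (cases "q = 0")
    case True
    then show ?thesis
      by (simp add: det_binom_mat_diff_eq_0)
  next
    case False
    then have "binom_mat_diff ?m ?s = binom_mat ?m (\<lambda>i. sum_list (take (Suc i) ((q - 1) # p # t)))"
      by (subst binom_mat_diff_eq_binom_mat) (simp_all add: fun_eq_iff)
    with False show ?thesis
      by (simp add: sylv_det_def)
  qed
  ultimately show ?thesis
    using det_binom_mat[of ?m ?s] by (simp add: sylv_det_def)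
qed

section \<open>Counting Sylvester classes\<close>

lemma bst_count_content_mset_Cons_Cons:
  assumes "sorted_wrt (>) (z # y # xs)" "p \<ge> 1" "q \<ge> 1"
  shows "bst_count (content_mset (q # p # t) (z # y # xs)) =
    bst_count (content_mset ((q - 1) # p # t) (z # y # xs)) + bst_count (content_mset ((p + q) # t) (y # xs))"
proof -
  have "\<forall>a\<in>#content_mset t xs. a < y"
    using assms(1) set_content_mset[of t xs] by auto
  with assms show ?thesis
    using bst_count_top_letters_rec[of "content_mset t xs" y z p q] by (simp add: ac_simps)
qed

(* The first multiplicity may be 0: the recursion lowers it one step at a time. *)
lemma bst_count_content_mset_eq_sylv_det:
  assumes "r \<noteq> []" "length xs = length r" "sorted_wrt (>) xs" "\<forall>a\<in>set (tl r). a > 0"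
  shows "int (bst_count (content_mset r xs)) = sylv_det r"
  using assms
proof (induction "sum_list r + length r" arbitrary: r xs rule: less_induct)
  case less
  from \<open>r \<noteq> []\<close> consider a where "r = [a]" | q p t where "r = q # p # t"
    by (metis list.exhaust)
  then show ?case
  proof cases
    case 1
    with less.prems show ?thesis
      by (auto simp: length_Suc_conv)
  next
    case 2
    with less.prems obtain z y xs' where xs: "xs = z # y # xs'"
      by (auto simp: length_Suc_conv)
    have p: "p \<ge> 1"
      using less.prems 2 by simp
    show ?thesis
    proof (cases "q = 0")
      case True
      have "int (bst_count (content_mset (p # t) (y # xs'))) = sylv_det (p # t)"
        by (rule less.hyps) (use less.prems 2 xs True in auto)
      with 2 xs True show ?thesis
        by (simp add: sylv_det_Cons_Cons)
    next
      case False
      have "int (bst_count (content_mset ((q - 1) # p # t) (z # y # xs'))) = sylv_det ((q - 1) # p # t)"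
        by (rule less.hyps) (use less.prems 2 xs False in auto)
      moreover have "int (bst_count (content_mset ((p + q) # t) (y # xs'))) = sylv_det ((p + q) # t)"
        by (rule less.hyps) (use less.prems 2 xs in auto)
      moreover have "bst_count (content_mset (q # p # t) (z # y # xs')) =
          bst_count (content_mset ((q - 1) # p # t) (z # y # xs')) +
          bst_count (content_mset ((p + q) # t) (y # xs'))"
        by (rule bst_count_content_mset_Cons_Cons) (use less.prems xs p False in auto)
      ultimately show ?thesis
        using 2 xs False by (simp add: sylv_det_Cons_Cons)
    qed
  qed
qed

lemma sum_take_rev:
  assumes "i < length al"
  shows "sum_list (take (Suc i) (rev al)) = (\<Sum>l\<in>{1..i+1}. al ! (length al - l))"
proof -
  have "sum_list (take (Suc i) (rev al)) = (\<Sum>l<Suc i. rev al ! l)"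
    using assms by (simp add: sum_list_sum_nth lessThan_atLeast0)
  also have "\<dots> = (\<Sum>l<Suc i. al ! (length al - Suc l))"
    using assms by (intro sum.cong) (auto simp: rev_nth)
  also have "\<dots> = (\<Sum>l\<in>{0..i}. al ! (length al - Suc l))"
    by (simp add: lessThan_Suc_atMost atLeast0AtMost)
  also have "\<dots> = (\<Sum>l\<in>{Suc 0..Suc i}. al ! (length al - l))"
    by (rule sum.shift_bounds_cl_Suc_ivl[symmetric])
  finally show ?thesis
    by simp
qed

lemma sylv_matrix_eq_binom_mat:
  "sylv_matrix al = binom_mat (length al - 1) (\<lambda>i. sum_list (take (Suc i) (rev al)))"
proof (rule eq_matI)
  fix i j assume "i < dim_row (binom_mat (length al - 1) (\<lambda>i. sum_list (take (Suc i) (rev al))))"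
    "j < dim_col (binom_mat (length al - 1) (\<lambda>i. sum_list (take (Suc i) (rev al))))"
  moreover from this have "i < length al"
    by simp
  ultimately show "sylv_matrix al $$ (i, j) =
      binom_mat (length al - 1) (\<lambda>i. sum_list (take (Suc i) (rev al))) $$ (i, j)"
    using sum_take_rev[of i al] by (simp add: sylv_matrix_def binom_mat_def Let_def)
qed (simp_all add: sylv_matrix_def Let_def)

theorem theorem4p2:
  fixes al "is" :: "nat list" and n k :: nat
  assumes "length al = k" and "k \<ge> 1"
    and "\<forall>a\<in>set al. a > 0" and "sum_list al = n"
    and "length is = k" and "sorted_wrt (<) is" and "\<forall>x\<in>set is. x > 0"
  shows "int (card (sylv_classes al is)) = det (sylv_matrix al)"
proof -
  have "int (card (sylv_classes al is)) = int (bst_count (content_mset (rev al) (rev is)))"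
    using assms(1,5) by (simp add: card_sylv_classes content_mset_rev)
  also have "\<dots> = sylv_det (rev al)"
    using assms(1-3,5,6) by (intro bst_count_content_mset_eq_sylv_det)
      (auto simp: sorted_wrt_rev dest: list.set_sel(2)[rotated])
  also have "\<dots> = det (sylv_matrix al)"
    by (simp add: sylv_det_def sylv_matrix_eq_binom_mat)
  finally show ?thesis .
qed

end
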